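(* Let $\lambda,\mu\in P^+$ for $\mathfrak g$ of type $C_2$. Then there exists a bijection $\mathcal S^{C}_{\lambda,\mu}\to\mathcal T^{C}_{\lambda,\mu}$.
   Context: $m_i=\lambda(h_i)$, $n_i=\mu(h_i)$ are non-negative integers ($\alpha_1$ is the short simple root). $\mathcal S^{C}_{\lambda,\mu}=\{(a,b,c,d)\in\mathbb Z_+^4: a\le\min\{m_1,n_1\},\ d\le\min\{m_2,n_2\},\ a+b+c\le\min\{m_1+m_2,n_1+n_2\},\ a+b+d\le\min\{m_1+m_2,n_1+n_2\},\ 2a+b\le m_1+n_1,\ 2d+b\le m_2+n_2,\ 2a+b+2(c-d)\le m_1+n_1\}$. $\mathcal T^{C}_{\lambda,\mu}=\{(a,b,c,d)\in\mathbb Z_+^4: a\le m_1,\ c\le m_2,\ d\le n_2,\ b\le n_1,\ c+b-a\le m_2,\ d+b-a\le m_2,\ a+2(c-d)\le n_1,\ b+2(c-d)\le n_1\}$. *)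

theory Defs
  imports Main
begin

text \<open>Weights lambda, mu of C2 are given by m_i = lambda(h_i), n_i = mu(h_i), nonnegative integers
 (alpha_1 short). Tuples (a,b,c,d) range over Z_+^4; we use int with nonnegativity so that
 differences such as c - d are genuine integer differences.\<close>

definition S_C :: "nat \<Rightarrow> nat \<Rightarrow> nat \<Rightarrow> nat \<Rightarrow> (int \<times> int \<times> int \<times> int) set" where
  "S_C m1 m2 n1 n2 = {(a,b,c,d). 0 \<le> a \<and> 0 \<le> b \<and> 0 \<le> c \<and> 0 \<le> d \<and>
     a \<le> min (int m1) (int n1) \<and> d \<le> min (int m2) (int n2) \<and>
     a + b + c \<le> min (int m1 + int m2) (int n1 + int n2) \<and>
     a + b + d \<le> min (int m1 + int m2) (int n1 + int n2) \<and>
     2*a + b \<le> int m1 + int n1 \<and> 2*d + b \<le> int m2 + int n2 \<and>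
     2*a + b + 2*(c - d) \<le> int m1 + int n1}"

definition T_C :: "nat \<Rightarrow> nat \<Rightarrow> nat \<Rightarrow> nat \<Rightarrow> (int \<times> int \<times> int \<times> int) set" where
  "T_C m1 m2 n1 n2 = {(a,b,c,d). 0 \<le> a \<and> 0 \<le> b \<and> 0 \<le> c \<and> 0 \<le> d \<and>
     a \<le> int m1 \<and> c \<le> int m2 \<and> d \<le> int n2 \<and> b \<le> int n1 \<and>
     c + b - a \<le> int m2 \<and> d + b - a \<le> int m2 \<and>
     a + 2*(c - d) \<le> int n1 \<and> b + 2*(c - d) \<le> int n1}"

end

theory Submission
  imports Defs
begin

text \<open>Write a tuple as \<open>(a, b, c, d) = of_coords ((u, v, k), e)\<close> with \<open>u = a + c - d\<close>,
  \<open>v = b + c + d\<close>, \<open>k = min c d\<close> and \<open>e = c - d\<close>. Over a fixed base point \<open>(u, v, k)\<close> the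
  inequalities defining either set become piecewise linear conditions on \<open>e\<close>: the part of the
  fibre with \<open>e \<ge> 0\<close> and the part with \<open>e < 0\<close> are intervals, and whenever both are nonempty
  they meet at \<open>0\<close> and \<open>-1\<close>, so every fibre is a single integer interval. A case analysis
  over the active bounds shows that the fibres of \<open>S_C\<close> and \<open>T_C\<close> over the same base point have
  the same length, and translating each fibre onto the other gives the bijection.\<close>

definition of_coords :: "(int \<times> int \<times> int) \<times> int \<Rightarrow> int \<times> int \<times> int \<times> int" where
  "of_coords = (\<lambda>((u, v, k), e). (u - e, v - 2*k - \<bar>e\<bar>, k + max e 0, k + max (- e) 0))"

definition coords :: "int \<times> int \<times> int \<times> int \<Rightarrow> (int \<times> int \<times> int) \<times> int" where
  "coords = (\<lambda>(a, b, c, d). ((a + c - d, b + c + d, min c d), c - d))"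

lemma of_coords_nonneg: "0 \<le> e \<Longrightarrow> of_coords ((u, v, k), e) = (u - e, v - 2*k - e, k + e, k)"
  by (simp add: of_coords_def)

lemma of_coords_neg: "e < 0 \<Longrightarrow> of_coords ((u, v, k), e) = (u - e, v - 2*k + e, k, k - e)"
  by (simp add: of_coords_def)

lemma of_coords_coords: "of_coords (coords x) = x"
  by (cases x) (auto simp: of_coords_def coords_def min_def max_def)

lemma coords_of_coords: "coords (of_coords y) = y"
  by (cases y) (auto simp: of_coords_def coords_def min_def max_def)

lemma bij_betw_shift_fibres:
  fixes g :: "'b \<times> int \<Rightarrow> 'a" and h :: "'a \<Rightarrow> 'b \<times> int" and L L' n :: "'b \<Rightarrow> int"
  assumes g_h: "\<And>x. g (h x) = x" and h_g: "\<And>y. h (g y) = y"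
    and S: "\<And>p e. g (p, e) \<in> S \<longleftrightarrow> L p \<le> e \<and> e < L p + n p"
    and T: "\<And>p e. g (p, e) \<in> T \<longleftrightarrow> L' p \<le> e \<and> e < L' p + n p"
  shows "bij_betw (\<lambda>x. case h x of (p, e) \<Rightarrow> g (p, e - L p + L' p)) S T"
proof -
  have g_h': "g (p, e) = x" if "h x = (p, e)" for x p e
    using g_h[of x] that by simp
  have shift_into: "(\<lambda>x. case h x of (p, e) \<Rightarrow> g (p, e - M p + M' p)) ` A \<subseteq> B"
    if A: "\<And>p e. g (p, e) \<in> A \<longleftrightarrow> M p \<le> e \<and> e < M p + n p"
      and B: "\<And>p e. g (p, e) \<in> B \<longleftrightarrow> M' p \<le> e \<and> e < M' p + n p"
    for A B :: "'a set" and M M' :: "'b \<Rightarrow> int"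
  proof
    fix y assume "y \<in> (\<lambda>x. case h x of (p, e) \<Rightarrow> g (p, e - M p + M' p)) ` A"
    then obtain x p e where "x \<in> A" "h x = (p, e)" "y = g (p, e - M p + M' p)"
      by (auto split: prod.splits)
    then show "y \<in> B"
      using A[of p e] B g_h' by auto
  qed
  show ?thesis
  proof (rule bij_betw_byWitness[where f' = "\<lambda>x. case h x of (p, e) \<Rightarrow> g (p, e - L' p + L p)"])
    show "\<forall>x\<in>S. (case h (case h x of (p, e) \<Rightarrow> g (p, e - L p + L' p)) of
                    (p, e) \<Rightarrow> g (p, e - L' p + L p)) = x"
      by (auto simp: h_g g_h' split: prod.splits)
    show "\<forall>x\<in>T. (case h (case h x of (p, e) \<Rightarrow> g (p, e - L' p + L p)) of
                    (p, e) \<Rightarrow> g (p, e - L p + L' p)) = x"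
      by (auto simp: h_g g_h' split: prod.splits)
  qed (use shift_into[OF S T] shift_into[OF T S] in auto)
qed

lemma glued_halves_iff_interval:
  fixes a b l c e :: int
  assumes "0 \<le> a" "1 \<le> l" and "P \<Longrightarrow> a \<le> b \<Longrightarrow> Q \<Longrightarrow> l \<le> c \<Longrightarrow> a = 0 \<and> l = 1"
  shows "(0 \<le> e \<and> P \<and> a \<le> e \<and> e \<le> b) \<or> (e < 0 \<and> Q \<and> l \<le> - e \<and> - e \<le> c) \<longleftrightarrow>
    (if Q \<and> l \<le> c then - c else a) \<le> e \<and>
    e < (if Q \<and> l \<le> c then - c else a)
          + ((if Q then max 0 (c - l + 1) else 0) + (if P then max 0 (b - a + 1) else 0))"
  using assms by (cases "a \<le> b") (auto simp: max_def)

lemma eq_Max_D: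
  fixes A :: "'a::linorder set"
  assumes "x = Max A" "finite A" "A \<noteq> {}"
  shows "x \<in> A \<and> (\<forall>a\<in>A. a \<le> x)"
  using assms by simp

lemma eq_Min_D:
  fixes A :: "'a::linorder set"
  assumes "x = Min A" "finite A" "A \<noteq> {}"
  shows "x \<in> A \<and> (\<forall>a\<in>A. x \<le> a)"
  using assms by simp

locale C2_weights =
  fixes m1 m2 n1 n2 :: int
  assumes nonneg: "0 \<le> m1" "0 \<le> m2" "0 \<le> n1" "0 \<le> n2"
begin

abbreviation S :: "(int \<times> int \<times> int \<times> int) set" where
  "S \<equiv> S_C (nat m1) (nat m2) (nat n1) (nat n2)"

abbreviation T :: "(int \<times> int \<times> int \<times> int) set" where
  "T \<equiv> T_C (nat m1) (nat m2) (nat n1) (nat n2)"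

definition S_pos_ok :: "int \<Rightarrow> int \<Rightarrow> int \<Rightarrow> bool" where
  "S_pos_ok u v k \<longleftrightarrow> 0 \<le> k \<and> k \<le> m2 \<and> k \<le> n2"

definition S_pos_min :: "int \<Rightarrow> int \<Rightarrow> int \<Rightarrow> int" where
  "S_pos_min u v k = Max {0, u - m1, u - n1, u + v - k - (m1 + m2), u + v - k - (n1 + n2),
     v - (m2 + n2), 2*u + v - 2*k - (m1 + n1)}"

definition S_pos_max :: "int \<Rightarrow> int \<Rightarrow> int \<Rightarrow> int" where
  "S_pos_max u v k = Min {u, v - 2*k}"

definition S_neg_ok :: "int \<Rightarrow> int \<Rightarrow> int \<Rightarrow> bool" where
  "S_neg_ok u v k \<longleftrightarrow> 0 \<le> k \<and> u + v - k \<le> m1 + m2 \<and> u + v - k \<le> n1 + n2"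

definition S_neg_min :: "int \<Rightarrow> int \<Rightarrow> int \<Rightarrow> int" where
  "S_neg_min u v k = Max {1, - u, 2*u + v - 2*k - (m1 + n1)}"

definition S_neg_max :: "int \<Rightarrow> int \<Rightarrow> int \<Rightarrow> int" where
  "S_neg_max u v k = Min {v - 2*k, m1 - u, n1 - u, m2 - k, n2 - k, m1 + m2 - u - v + k,
     n1 + n2 - u - v + k, m1 + n1 - 2*u - v + 2*k, m2 + n2 - v}"

definition T_pos_ok :: "int \<Rightarrow> int \<Rightarrow> int \<Rightarrow> bool" where
  "T_pos_ok u v k \<longleftrightarrow> 0 \<le> k \<and> k \<le> n2 \<and> v - k - u \<le> m2"

definition T_pos_min :: "int \<Rightarrow> int \<Rightarrow> int \<Rightarrow> int" where
  "T_pos_min u v k = Max {0, u - m1, v - 2*k - n1}"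

definition T_pos_max :: "int \<Rightarrow> int \<Rightarrow> int \<Rightarrow> int" where
  "T_pos_max u v k = Min {u, m2 - k, v - 2*k, m2 + u + k - v, n1 - u, n1 - v + 2*k}"

definition T_neg_ok :: "int \<Rightarrow> int \<Rightarrow> int \<Rightarrow> bool" where
  "T_neg_ok u v k \<longleftrightarrow> 0 \<le> k \<and> k \<le> m2"

definition T_neg_min :: "int \<Rightarrow> int \<Rightarrow> int \<Rightarrow> int" where
  "T_neg_min u v k = Max {1, - u, v - 2*k - n1, v - k - u - m2, u - n1}"

definition T_neg_max :: "int \<Rightarrow> int \<Rightarrow> int \<Rightarrow> int" where
  "T_neg_max u v k = Min {m1 - u, n2 - k, v - 2*k}"

definition S_start :: "int \<Rightarrow> int \<Rightarrow> int \<Rightarrow> int" where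
  "S_start u v k =
     (if S_neg_ok u v k \<and> S_neg_min u v k \<le> S_neg_max u v k then - S_neg_max u v k else S_pos_min u v k)"

definition S_count :: "int \<Rightarrow> int \<Rightarrow> int \<Rightarrow> int" where
  "S_count u v k =
     (if S_neg_ok u v k then max 0 (S_neg_max u v k - S_neg_min u v k + 1) else 0)
   + (if S_pos_ok u v k then max 0 (S_pos_max u v k - S_pos_min u v k + 1) else 0)"

definition T_start :: "int \<Rightarrow> int \<Rightarrow> int \<Rightarrow> int" where
  "T_start u v k =
     (if T_neg_ok u v k \<and> T_neg_min u v k \<le> T_neg_max u v k then - T_neg_max u v k else T_pos_min u v k)"

definition T_count :: "int \<Rightarrow> int \<Rightarrow> int \<Rightarrow> int" where
  "T_count u v k =
     (if T_neg_ok u v k then max 0 (T_neg_max u v k - T_neg_min u v k + 1) else 0)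
   + (if T_pos_ok u v k then max 0 (T_pos_max u v k - T_pos_min u v k + 1) else 0)"

lemmas bounds_attained =
  eq_Max_D[OF S_pos_min_def] eq_Min_D[OF S_pos_max_def] eq_Max_D[OF S_neg_min_def] eq_Min_D[OF S_neg_max_def]
  eq_Max_D[OF T_pos_min_def] eq_Min_D[OF T_pos_max_def] eq_Max_D[OF T_neg_min_def] eq_Min_D[OF T_neg_max_def]

lemmas Max_Min_literal_simps =
  Max_le_iff Min_ge_iff finite_insert finite.emptyI insert_not_empty insert_iff empty_iff ball_simps simp_thms
  True_implies_equals

lemma int_nat_weights: "int (nat m1) = m1" "int (nat m2) = m2" "int (nat n1) = n1" "int (nat n2) = n2"
  using nonneg by simp_all

lemma of_coords_mem_S_iff_halves:
  "of_coords ((u, v, k), e) \<in> S \<longleftrightarrow>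
     (0 \<le> e \<and> S_pos_ok u v k \<and> S_pos_min u v k \<le> e \<and> e \<le> S_pos_max u v k)
   \<or> (e < 0 \<and> S_neg_ok u v k \<and> S_neg_min u v k \<le> - e \<and> - e \<le> S_neg_max u v k)"
proof (cases "0 \<le> e")
  case True
  then show ?thesis
    by (simp only: of_coords_nonneg S_C_def mem_Collect_eq prod.case int_nat_weights min.bounded_iff
        S_pos_ok_def S_pos_min_def S_pos_max_def Max_Min_literal_simps) (smt (verit))
next
  case False
  then show ?thesis
    by (simp only: of_coords_neg not_le S_C_def mem_Collect_eq prod.case int_nat_weights min.bounded_iff
        S_neg_ok_def S_neg_min_def S_neg_max_def Max_Min_literal_simps) (smt (verit))
qed

lemma of_coords_mem_T_iff_halves:
  "of_coords ((u, v, k), e) \<in> T \<longleftrightarrow>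
     (0 \<le> e \<and> T_pos_ok u v k \<and> T_pos_min u v k \<le> e \<and> e \<le> T_pos_max u v k)
   \<or> (e < 0 \<and> T_neg_ok u v k \<and> T_neg_min u v k \<le> - e \<and> - e \<le> T_neg_max u v k)"
proof (cases "0 \<le> e")
  case True
  then show ?thesis
    by (simp only: of_coords_nonneg T_C_def mem_Collect_eq prod.case int_nat_weights
        T_pos_ok_def T_pos_min_def T_pos_max_def Max_Min_literal_simps) (smt (verit))
next
  case False
  then show ?thesis
    by (simp only: of_coords_neg not_le T_C_def mem_Collect_eq prod.case int_nat_weights
        T_neg_ok_def T_neg_min_def T_neg_max_def Max_Min_literal_simps) (smt (verit))
qed

lemma S_halves_glue:
  "S_pos_ok u v k \<Longrightarrow> S_pos_min u v k \<le> S_pos_max u v k \<Longrightarrow>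
   S_neg_ok u v k \<Longrightarrow> S_neg_min u v k \<le> S_neg_max u v k \<Longrightarrow>
   S_pos_min u v k = 0 \<and> S_neg_min u v k = 1"
  using bounds_attained[where u = u and v = v and k = k] unfolding S_pos_ok_def S_neg_ok_def
  by (simp only: Max_Min_literal_simps) (smt (verit))

lemma T_halves_glue:
  "T_pos_ok u v k \<Longrightarrow> T_pos_min u v k \<le> T_pos_max u v k \<Longrightarrow>
   T_neg_ok u v k \<Longrightarrow> T_neg_min u v k \<le> T_neg_max u v k \<Longrightarrow>
   T_pos_min u v k = 0 \<and> T_neg_min u v k = 1"
  using bounds_attained[where u = u and v = v and k = k] unfolding T_pos_ok_def T_neg_ok_def
  by (simp only: Max_Min_literal_simps) (smt (verit))

lemma of_coords_mem_S_iff: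
  "of_coords ((u, v, k), e) \<in> S \<longleftrightarrow> S_start u v k \<le> e \<and> e < S_start u v k + S_count u v k"
proof -
  have "0 \<le> S_pos_min u v k" "1 \<le> S_neg_min u v k"
    unfolding S_pos_min_def S_neg_min_def by (rule Max_ge; simp)+
  then show ?thesis
    unfolding of_coords_mem_S_iff_halves S_start_def S_count_def
    by (rule glued_halves_iff_interval[OF _ _ S_halves_glue])
qed

lemma of_coords_mem_T_iff:
  "of_coords ((u, v, k), e) \<in> T \<longleftrightarrow> T_start u v k \<le> e \<and> e < T_start u v k + T_count u v k"
proof -
  have "0 \<le> T_pos_min u v k" "1 \<le> T_neg_min u v k"
    unfolding T_pos_min_def T_neg_min_def by (rule Max_ge; simp)+
  then show ?thesis
    unfolding of_coords_mem_T_iff_halves T_start_def T_count_def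
    by (rule glued_halves_iff_interval[OF _ _ T_halves_glue])
qed

lemma S_count_eq_T_count: "S_count u v k = T_count u v k"
  using nonneg bounds_attained[where u = u and v = v and k = k]
  unfolding S_count_def T_count_def S_pos_ok_def S_neg_ok_def T_pos_ok_def T_neg_ok_def
  by (simp only: Max_Min_literal_simps) (smt (z3))

lemma ex_bij_betw_S_T: "\<exists>f. bij_betw f S T"
proof -
  let ?S_start = "\<lambda>(u, v, k). S_start u v k"
  let ?T_start = "\<lambda>(u, v, k). T_start u v k"
  let ?count = "\<lambda>(u, v, k). S_count u v k"
  have "bij_betw (\<lambda>x. case coords x of (p, e) \<Rightarrow> of_coords (p, e - ?S_start p + ?T_start p)) S T"
  proof (rule bij_betw_shift_fibres[where n = ?count])
    show "of_coords (coords x) = x" for x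
      by (rule of_coords_coords)
    show "coords (of_coords y) = y" for y
      by (rule coords_of_coords)
    show "of_coords (p, e) \<in> S \<longleftrightarrow> ?S_start p \<le> e \<and> e < ?S_start p + ?count p" for p e
      by (cases p) (simp add: of_coords_mem_S_iff)
    show "of_coords (p, e) \<in> T \<longleftrightarrow> ?T_start p \<le> e \<and> e < ?T_start p + ?count p" for p e
      by (cases p) (simp add: of_coords_mem_T_iff S_count_eq_T_count)
  qed
  then show ?thesis
    by blast
qed

end

theorem lemma5p4:
  fixes m1 m2 n1 n2 :: nat
  shows "\<exists>f. bij_betw f (S_C m1 m2 n1 n2) (T_C m1 m2 n1 n2)"
proof -
  interpret C2_weights "int m1" "int m2" "int n1" "int n2"
    by unfold_locales simp_all
  show ?thesis
    using ex_bij_betw_S_T by simp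
qed

end
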